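(* Let $k\ge1$, and let $\mathcal P=\{p_1,\dots,p_{k^2}\}$ be a family of real polynomials in the commuting variables $x_1,\dots,x_{2k^2}$ admitting an nc representation $p(X,Y)$ of degree $d>1$. Let $s>t\ge2$ and $a\ne0$, and suppose that, counting over all polynomials, exactly $k$ terms of the form $a\,x_u^sx_v^t$ ($u\ne v$) appear in the family, namely $a\,x_{i_1}^sx_{j_1}^t,\dots,a\,x_{i_k}^sx_{j_k}^t$. If for each $n$ one of $x_{i_n},x_{j_n}$ is a diagonal entry of $X$ and the other is the diagonal entry of $Y$ in the same position, then $x_{i_1},\dots,x_{i_k}$ are the diagonal entries of one of the matrices $X,Y$ and $x_{j_1},\dots,x_{j_k}$ are the diagonal entries of the other.
   Context: The family $\mathcal P$ admits an nc representation $p(X,Y)$ if there are $k\times k$ matrices $X,Y$ whose $2k^2$ entries are the variables $x_1,\dots,x_{2k^2}$, each used exactly once, and a noncommutative polynomial $p$ in two letters with real coefficients such that the matrix $p(X,Y)$ is a $k\times k$ array whose entries are $p_1,\dots,p_{k^2}$, each exactly once. A "term" means a monomial with its nonzero coefficient after collecting like terms. *)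

theory Defs
  imports Complex_Main "HOL-Library.Multiset" "HOL-Library.Poly_Mapping"
begin

(* Commuting variables are numbered by nat; a (commutative) monomial is a multiset
   of variable indices; a commutative real polynomial is given by its coefficient
   function  nat multiset => real.
   A noncommutative polynomial in two letters is a finitely supported function
   from words to real coefficients; letter False = X, letter True = Y.
   The k x k matrices X, Y are encoded by  ent :: bool => nat => nat => nat :
   ent False i j is the index of the variable in entry (i,j) of X,
   ent True  i j the one of Y (indices i,j < k). *)

type_synonym ncpoly = "bool list \<Rightarrow>\<^sub>0 real"

definition nc_degree :: "ncpoly \<Rightarrow> nat" where
  "nc_degree p = (if Poly_Mapping.keys p = {} then 0 else Max (length ` Poly_Mapping.keys p))"

definition idx_paths :: "nat \<Rightarrow> nat \<Rightarrow> nat \<Rightarrow> nat \<Rightarrow> nat list set" where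
  "idx_paths k L r c =
     {is. length is = Suc L \<and> set is \<subseteq> {..<k} \<and> hd is = r \<and> last is = c}"

definition path_mono :: "(bool \<Rightarrow> nat \<Rightarrow> nat \<Rightarrow> nat) \<Rightarrow> bool list \<Rightarrow> nat list \<Rightarrow> nat multiset" where
  "path_mono ent w is = (\<Sum>l<length w. {# ent (w ! l) (is ! l) (is ! Suc l) #})"

(* coefficient of the monomial m in the (r,c) entry of the matrix p(X,Y) *)
definition nc_eval_entry ::
  "nat \<Rightarrow> (bool \<Rightarrow> nat \<Rightarrow> nat \<Rightarrow> nat) \<Rightarrow> ncpoly \<Rightarrow> nat \<Rightarrow> nat \<Rightarrow> nat multiset \<Rightarrow> real" where
  "nc_eval_entry k ent p r c m =
     (\<Sum>w\<in>Poly_Mapping.keys p. Poly_Mapping.lookup p w *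
        real (card {is \<in> idx_paths k (length w) r c. path_mono ent w is = m}))"

definition var_matrices :: "nat \<Rightarrow> (bool \<Rightarrow> nat \<Rightarrow> nat \<Rightarrow> nat) \<Rightarrow> bool" where
  "var_matrices k ent \<longleftrightarrow>
     bij_betw (\<lambda>(b, i, j). ent b i j) (UNIV \<times> {..<k} \<times> {..<k}) {1..2 * k ^ 2}"

definition nc_representation ::
  "nat \<Rightarrow> (nat \<Rightarrow> nat multiset \<Rightarrow> real) \<Rightarrow> (bool \<Rightarrow> nat \<Rightarrow> nat \<Rightarrow> nat) \<Rightarrow> ncpoly \<Rightarrow> bool" where
  "nc_representation k fam ent p \<longleftrightarrow>
     var_matrices k ent \<and>
     (\<exists>\<sigma>. bij_betw \<sigma> ({..<k} \<times> {..<k}) {1..k ^ 2} \<and>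
          (\<forall>r<k. \<forall>c<k. fam (\<sigma> (r, c)) = nc_eval_entry k ent p r c))"

definition sv_terms ::
  "nat \<Rightarrow> (nat \<Rightarrow> nat multiset \<Rightarrow> real) \<Rightarrow> real \<Rightarrow> nat \<Rightarrow> nat \<Rightarrow> (nat \<times> nat \<times> nat) set" where
  "sv_terms k fam a s t =
     {(n, u, v). n \<in> {1..k ^ 2} \<and> u \<noteq> v \<and>
        fam n (replicate_mset s u + replicate_mset t v) = a}"

end

theory Submission imports Defs begin

text \<open>Write \<open>X[m,m]\<close>, \<open>Y[m,m]\<close> for the diagonal variables in position \<open>m\<close>.
A path \<open>i\<^sub>0,\<dots>,i\<^sub>L\<close> contributes to a monomial built only from \<open>X[m,m]\<close> and
\<open>Y[m,m]\<close> only if it never leaves \<open>m\<close>, so the coefficient of \<open>X[m,m]\<^sup>s Y[m,m]\<^sup>t\<close>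
in \<open>p(X,Y)\<close> sits in the diagonal entry \<open>(m,m)\<close> alone and equals the sum
\<open>c\<^sub>X\<close> of the coefficients of the words of \<open>p\<close> with \<open>s\<close> letters \<open>X\<close> and \<open>t\<close>
letters \<open>Y\<close>, independently of \<open>m\<close>; symmetrically for \<open>Y[m,m]\<^sup>s X[m,m]\<^sup>t\<close> and \<open>c\<^sub>Y\<close>.
Hence the terms \<open>a x\<^sub>u\<^sup>s x\<^sub>v\<^sup>t\<close> on diagonal pairs are exactly \<open>k\<close> terms for each of
\<open>c\<^sub>X = a\<close>, \<open>c\<^sub>Y = a\<close>. There being only \<open>k\<close> of them, exactly one of the two
equations holds, and all \<open>u\<close> then lie on the diagonal of the same matrix.\<close>

lemma var_matrices_ent_eq_iff:
  assumes "var_matrices k ent" "i < k" "j < k" "i' < k" "j' < k"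
  shows "ent b i j = ent b' i' j' \<longleftrightarrow> b = b' \<and> i = i' \<and> j = j'"
proof -
  have "inj_on (\<lambda>(b, i, j). ent b i j) (UNIV \<times> {..<k} \<times> {..<k})"
    using assms(1) unfolding var_matrices_def bij_betw_def by blast
  from inj_onD[OF this, of "(b, i, j)" "(b', i', j')"] assms show ?thesis by auto
qed

lemma bool_mset_eq_replicate:
  fixes A :: "bool multiset"
  shows "A = replicate_mset (count A b) b + replicate_mset (count A (\<not> b)) (\<not> b)"
  by (rule multiset_eqI) (cases b; auto)

lemma replicate_mset_plus_eq_iff:
  assumes "u \<noteq> v"
  shows "replicate_mset a u + replicate_mset b v = replicate_mset s u + replicate_mset t v
    \<longleftrightarrow> a = s \<and> b = t"
  using assms by (auto simp: multiset_eq_iff)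

lemma image_mset_bool_eq_iff:
  fixes A :: "bool multiset"
  assumes "f b \<noteq> f (\<not> b)"
  shows "image_mset f A = replicate_mset s (f b) + replicate_mset t (f (\<not> b))
    \<longleftrightarrow> count A b = s \<and> count A (\<not> b) = t"
proof -
  have "image_mset f A = replicate_mset (count A b) (f b) + replicate_mset (count A (\<not> b)) (f (\<not> b))"
    by (subst bool_mset_eq_replicate[of A b]) simp
  then show ?thesis using replicate_mset_plus_eq_iff[OF assms] by simp
qed

lemma sum_lessThan_single_mset: "(\<Sum>l<n. {# f l #}) = mset (map f [0..<n])"
  by (induction n) auto

lemma path_mono_eq_mset:
  "path_mono ent w is = mset (map (\<lambda>l. ent (w ! l) (is ! l) (is ! Suc l)) [0..<length w])"
  unfolding path_mono_def by (rule sum_lessThan_single_mset)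

lemma path_mono_replicate:
  "path_mono ent w (replicate (Suc (length w)) m) = image_mset (\<lambda>b. ent b m m) (mset w)"
proof -
  have "map (\<lambda>l. ent (w ! l) (replicate (Suc (length w)) m ! l) (replicate (Suc (length w)) m ! Suc l))
      [0..<length w] = map (\<lambda>b. ent b m m) (map ((!) w) [0..<length w])"
    by (auto simp del: replicate_Suc simp: nth_replicate)
  then show ?thesis by (simp only: path_mono_eq_mset map_nth mset_map)
qed

lemma path_eq_replicate_if_path_mono_diagonal:
  assumes vm: "var_matrices k ent" and "m < k"
    and path: "is \<in> idx_paths k (length w) r c" and "w \<noteq> []"
    and diag: "set_mset (path_mono ent w is) \<subseteq> {ent False m m, ent True m m}"
  shows "is = replicate (Suc (length w)) m"
proof -
  from path have len: "length is = Suc (length w)" and bound: "set is \<subseteq> {..<k}"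
    by (auto simp: idx_paths_def)
  have step: "is ! l = m \<and> is ! Suc l = m" if "l < length w" for l
  proof -
    have "ent (w ! l) (is ! l) (is ! Suc l) \<in> {ent False m m, ent True m m}"
      using diag that by (simp add: path_mono_eq_mset image_subset_iff)
    moreover have "is ! l < k" "is ! Suc l < k" using bound len that by (auto simp: subset_iff)
    ultimately show ?thesis using var_matrices_ent_eq_iff[OF vm _ _ \<open>m < k\<close> \<open>m < k\<close>] by blast
  qed
  have "is ! i = m" if "i < length is" for i
  proof (cases "i < length w")
    case True
    then show ?thesis using step by blast
  next
    case False
    then have "i = Suc (length w - 1)" using that len \<open>w \<noteq> []\<close> by simp
    then show ?thesis using step[of "length w - 1"] \<open>w \<noteq> []\<close> by simp
  qed
  then show ?thesis using len by (intro replicate_eqI) (auto simp: in_set_conv_nth)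
qed

definition diag_mono :: "(bool \<Rightarrow> nat \<Rightarrow> nat \<Rightarrow> nat) \<Rightarrow> bool \<Rightarrow> nat \<Rightarrow> nat \<Rightarrow> nat \<Rightarrow> nat multiset" where
  "diag_mono ent b m s t = replicate_mset s (ent b m m) + replicate_mset t (ent (\<not> b) m m)"

definition letter_count_coeff :: "ncpoly \<Rightarrow> bool \<Rightarrow> nat \<Rightarrow> nat \<Rightarrow> real" where
  "letter_count_coeff p b s t = (\<Sum>w\<in>Poly_Mapping.keys p.
     if count (mset w) b = s \<and> count (mset w) (\<not> b) = t then Poly_Mapping.lookup p w else 0)"

lemma card_paths_diag_mono:
  assumes vm: "var_matrices k ent" and "m < k" "r < k" "c < k" "0 < s"
  shows "card {is \<in> idx_paths k (length w) r c. path_mono ent w is = diag_mono ent b m s t} =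
    (if r = m \<and> c = m \<and> count (mset w) b = s \<and> count (mset w) (\<not> b) = t then 1 else 0)"
    (is "card ?S = (if ?cond then 1 else 0)")
proof -
  let ?const = "replicate (Suc (length w)) m"
  have "ent b m m \<noteq> ent (\<not> b) m m" using var_matrices_ent_eq_iff[OF vm] \<open>m < k\<close> by simp
  then have const_iff: "path_mono ent w ?const = diag_mono ent b m s t
      \<longleftrightarrow> count (mset w) b = s \<and> count (mset w) (\<not> b) = t"
    unfolding path_mono_replicate diag_mono_def by (rule image_mset_bool_eq_iff)
  have "?S \<subseteq> {?const}"
  proof
    fix "is" assume "is \<in> ?S"
    moreover have "w \<noteq> []"
      using \<open>is \<in> ?S\<close> \<open>0 < s\<close> by (auto simp: path_mono_def diag_mono_def)
    moreover have "set_mset (diag_mono ent b m s t) \<subseteq> {ent False m m, ent True m m}"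
      by (cases b) (auto simp: diag_mono_def)
    ultimately show "is \<in> {?const}"
      using path_eq_replicate_if_path_mono_diagonal[OF vm \<open>m < k\<close>] by auto
  qed
  moreover have "?const \<in> ?S \<longleftrightarrow> ?cond"
    using const_iff \<open>m < k\<close> by (auto simp: idx_paths_def last_replicate)
  ultimately have "?S = (if ?cond then {?const} else {})" by auto
  then show ?thesis by simp
qed

lemma nc_eval_entry_diag_mono:
  assumes "var_matrices k ent" "m < k" "r < k" "c < k" "0 < s"
  shows "nc_eval_entry k ent p r c (diag_mono ent b m s t) =
    (if r = m \<and> c = m then letter_count_coeff p b s t else 0)"
  unfolding nc_eval_entry_def letter_count_coeff_def card_paths_diag_mono[OF assms]
  by (auto intro: sum.cong)

locale nc_rep =
  fixes k :: nat and fam :: "nat \<Rightarrow> nat multiset \<Rightarrow> real"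
    and ent :: "bool \<Rightarrow> nat \<Rightarrow> nat \<Rightarrow> nat" and p :: ncpoly and \<sigma> :: "nat \<times> nat \<Rightarrow> nat"
  assumes var_matrices: "var_matrices k ent"
    and \<sigma>_bij: "bij_betw \<sigma> ({..<k} \<times> {..<k}) {1..k ^ 2}"
    and fam_\<sigma>: "\<forall>r<k. \<forall>c<k. fam (\<sigma> (r, c)) = nc_eval_entry k ent p r c"
begin

definition diag_terms :: "bool \<Rightarrow> (nat \<times> nat \<times> nat) set" where
  "diag_terms b = (\<lambda>m. (\<sigma> (m, m), ent b m m, ent (\<not> b) m m)) ` {..<k}"

lemma diag_terms_subset_sv_terms:
  assumes "letter_count_coeff p b s t = a" "0 < s"
  shows "diag_terms b \<subseteq> sv_terms k fam a s t"
proof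
  fix x assume "x \<in> diag_terms b"
  then obtain m where "m < k" and x: "x = (\<sigma> (m, m), ent b m m, ent (\<not> b) m m)"
    unfolding diag_terms_def by blast
  have "\<sigma> (m, m) \<in> {1..k ^ 2}" using \<sigma>_bij \<open>m < k\<close> by (auto dest: bij_betwE)
  moreover have "ent b m m \<noteq> ent (\<not> b) m m"
    using var_matrices_ent_eq_iff[OF var_matrices] \<open>m < k\<close> by simp
  moreover have "fam (\<sigma> (m, m)) (diag_mono ent b m s t) = a"
    using fam_\<sigma> \<open>m < k\<close> nc_eval_entry_diag_mono[OF var_matrices \<open>m < k\<close> \<open>m < k\<close> \<open>m < k\<close> \<open>0 < s\<close>] assms(1)
    by simp
  ultimately show "x \<in> sv_terms k fam a s t" unfolding sv_terms_def diag_mono_def x by simp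
qed

lemma sv_terms_diagonal_in_diag_terms:
  assumes "(n, ent b m m, ent (\<not> b) m m) \<in> sv_terms k fam a s t" "m < k" "a \<noteq> 0" "0 < s"
  shows "letter_count_coeff p b s t = a \<and> (n, ent b m m, ent (\<not> b) m m) \<in> diag_terms b"
proof -
  have "n \<in> \<sigma> ` ({..<k} \<times> {..<k})" and coeff: "fam n (diag_mono ent b m s t) = a"
    using assms(1) bij_betw_imp_surj_on[OF \<sigma>_bij] by (auto simp: sv_terms_def diag_mono_def)
  then obtain r c where "r < k" "c < k" and n: "n = \<sigma> (r, c)" by blast
  have "(if r = m \<and> c = m then letter_count_coeff p b s t else 0) = a"
    using coeff fam_\<sigma> nc_eval_entry_diag_mono[OF var_matrices \<open>m < k\<close> \<open>r < k\<close> \<open>c < k\<close> \<open>0 < s\<close>]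
      \<open>r < k\<close> \<open>c < k\<close> n by simp
  then have "r = m" "c = m" "letter_count_coeff p b s t = a" using \<open>a \<noteq> 0\<close> by (auto split: if_splits)
  then show ?thesis using \<open>m < k\<close> n unfolding diag_terms_def by blast
qed

lemma diag_terms_first_vars: "{u. \<exists>n v. (n, u, v) \<in> diag_terms b} = {ent b m m | m. m < k}"
  unfolding diag_terms_def by auto

lemma diag_terms_second_vars: "{v. \<exists>n u. (n, u, v) \<in> diag_terms b} = {ent (\<not> b) m m | m. m < k}"
  unfolding diag_terms_def by auto

lemma card_diag_terms: "card (diag_terms b) = k"
proof -
  have "inj_on (\<lambda>m. (\<sigma> (m, m), ent b m m, ent (\<not> b) m m)) {..<k}"
    by (rule inj_onI) (use var_matrices_ent_eq_iff[OF var_matrices] in auto)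
  then show ?thesis unfolding diag_terms_def by (simp add: card_image)
qed

lemma card_diag_terms_Un: "card (diag_terms False \<union> diag_terms True) = 2 * k"
proof -
  have "diag_terms False \<inter> diag_terms True = {}"
    using var_matrices_ent_eq_iff[OF var_matrices] unfolding diag_terms_def by auto
  moreover have "finite (diag_terms b)" for b unfolding diag_terms_def by simp
  ultimately show ?thesis by (simp add: card_Un_disjoint card_diag_terms)
qed

lemma sv_terms_eq_diag_terms:
  assumes "k \<ge> 1" "a \<noteq> 0" "0 < s"
    and card: "card (sv_terms k fam a s t) = k"
    and diagonal: "\<forall>(n, u, v) \<in> sv_terms k fam a s t. \<exists>m<k.
            (u = ent False m m \<and> v = ent True m m) \<or> (u = ent True m m \<and> v = ent False m m)"
  shows "\<exists>b. sv_terms k fam a s t = diag_terms b"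
proof -
  let ?S = "sv_terms k fam a s t"
  have in_diag: "\<exists>b. letter_count_coeff p b s t = a \<and> x \<in> diag_terms b" if "x \<in> ?S" for x
  proof -
    obtain n m b where "m < k" and x: "x = (n, ent b m m, ent (\<not> b) m m)"
      using diagonal \<open>x \<in> ?S\<close> by fastforce
    then show ?thesis using sv_terms_diagonal_in_diag_terms \<open>x \<in> ?S\<close> assms(2,3) by blast
  qed
  have "?S \<noteq> {}" using card \<open>k \<ge> 1\<close> by auto
  then obtain b where b: "letter_count_coeff p b s t = a" using in_diag by blast
  have not_b: "letter_count_coeff p (\<not> b) s t \<noteq> a"
  proof
    assume "letter_count_coeff p (\<not> b) s t = a"
    then have "diag_terms b \<union> diag_terms (\<not> b) \<subseteq> ?S"
      using diag_terms_subset_sv_terms b \<open>0 < s\<close> by blast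
    then have "diag_terms False \<union> diag_terms True \<subseteq> ?S" by (cases b) auto
    moreover have "finite ?S" using card \<open>k \<ge> 1\<close> by (simp add: card_ge_0_finite)
    ultimately have "card (diag_terms False \<union> diag_terms True) \<le> k"
      using card card_mono by metis
    then show False using card_diag_terms_Un \<open>k \<ge> 1\<close> by simp
  qed
  have S_sub: "?S \<subseteq> diag_terms b"
  proof
    fix x assume "x \<in> ?S"
    then obtain b' where "letter_count_coeff p b' s t = a" "x \<in> diag_terms b'" using in_diag by blast
    moreover from this(1) not_b have "b' = b" by (cases b; cases b') auto
    ultimately show "x \<in> diag_terms b" by simp
  qed
  have "?S = diag_terms b"
    using S_sub diag_terms_subset_sv_terms[OF b \<open>0 < s\<close>] by (rule subset_antisym)
  then show ?thesis ..
qed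

end

theorem lemma2p19:
  fixes k :: nat and fam :: "nat \<Rightarrow> nat multiset \<Rightarrow> real"
    and ent :: "bool \<Rightarrow> nat \<Rightarrow> nat \<Rightarrow> nat" and p :: ncpoly
    and s t :: nat and a :: real
  assumes "k \<ge> 1"
    and "nc_representation k fam ent p"
    and "nc_degree p > 1"
    and "s > t" and "t \<ge> 2" and "a \<noteq> 0"
    and "card (sv_terms k fam a s t) = k"
    and "\<forall>(n, u, v) \<in> sv_terms k fam a s t. \<exists>m<k.
            (u = ent False m m \<and> v = ent True m m) \<or> (u = ent True m m \<and> v = ent False m m)"
  shows "({u. \<exists>n v. (n, u, v) \<in> sv_terms k fam a s t} = {ent False m m | m. m < k} \<and>
          {v. \<exists>n u. (n, u, v) \<in> sv_terms k fam a s t} = {ent True m m | m. m < k}) \<or>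
         ({u. \<exists>n v. (n, u, v) \<in> sv_terms k fam a s t} = {ent True m m | m. m < k} \<and>
          {v. \<exists>n u. (n, u, v) \<in> sv_terms k fam a s t} = {ent False m m | m. m < k})"
proof -
  obtain \<sigma> where "nc_rep k fam ent p \<sigma>"
    using assms(2) unfolding nc_representation_def nc_rep_def by blast
  then interpret nc_rep k fam ent p \<sigma> .
  have "0 < s" using \<open>s > t\<close> by simp
  then obtain b where "sv_terms k fam a s t = diag_terms b"
    using sv_terms_eq_diag_terms assms(1,6-8) by blast
  then show ?thesis using diag_terms_first_vars diag_terms_second_vars by (cases b) simp_all
qed

end
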